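(* (a) Let $n\ge3$ be odd, $a_0,\dots,a_{n-1}\in\mathbb{R}$ with $a_0<0$, $a_k>0$ for $k\ne0$, and $a_0+a_2<0$, and let $\mathcal A(x)=\det(xI-A')$ where $A'$ is the $n\times n$ matrix with $(A')_{j,j+1}=a_{j+1}$, $(A')_{j,j-1}=-a_{j-1}$ (indices mod $n$), other entries zero. Then there exists $x_2^*>\sqrt{-a_1(a_0+a_2)}$ with $\mathcal A(x_2^* )=0$. (b) Let $\alpha\le-1$, $\beta\ge1$ be integers and $a_k\in\mathbb{R}$ for $\alpha\le k\le\max(\beta,2)$ with $a_0<0$, $a_k>0$ for $k\ne0$, and $a_0+a_2<0$; let $\mathcal T_\alpha^\beta(x)=\det(xI-M)$ where $M$ is indexed by $\alpha,\dots,\beta$ with $M_{j,j+1}=a_{j+1}$, $M_{j,j-1}=-a_{j-1}$, other entries zero. Then there exists $x_1^*>\sqrt{-a_1(a_0+a_2)}$ with $\mathcal T_\alpha^\beta(x_1^* )=0$. *)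

theory Defs
  imports Complex_Main "Jordan_Normal_Form.Determinant"
begin

definition cyc_mat :: "nat \<Rightarrow> (nat \<Rightarrow> real) \<Rightarrow> real mat" where
  "cyc_mat n a = mat n n (\<lambda>(j, c).
     if c = (j + 1) mod n then a c
     else if (c + 1) mod n = j then - a c
     else 0)"

text \<open>The tridiagonal matrix M indexed by alpha..beta; matrix position i corresponds
  to index alpha + i.  Entry (j, j+1) = a(j+1), entry (j, j-1) = - a(j-1).\<close>
definition tri_mat :: "int \<Rightarrow> int \<Rightarrow> (int \<Rightarrow> real) \<Rightarrow> real mat" where
  "tri_mat \<alpha> \<beta> a = mat (nat (\<beta> - \<alpha> + 1)) (nat (\<beta> - \<alpha> + 1)) (\<lambda>(i, l).
     let j = \<alpha> + int i; c = \<alpha> + int l in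
     if c = j + 1 then a c
     else if c = j - 1 then - a c
     else 0)"

definition charp :: "real mat \<Rightarrow> real \<Rightarrow> real" where
  "charp B x = det (x \<cdot>\<^sub>m 1\<^sub>m (dim_row B) - B)"

end

theory Submission
  imports Defs
begin

text \<open>With q_j = -a_j a_(j+1), both characteristic polynomials are continuants, built
  from the recurrence K_(k+2) = x K_(k+1) - q K_k.  For x > 0 a block whose q's are all \<le> 0
  (one avoiding index 0, the only place where a is negative) is positive and grows with its
  length.  At x0 = sqrt (-a_1 (a_0 + a_2)) one has x0^2 + a_1 a_2 = -a_0 a_1, which makes the block
  starting with q = -a_0 a_1 nonpositive; expanding the whole polynomial around that block shows
  that it is negative at x0, while it is positive for large x.  For odd n the two corner
  products of the cyclic matrix cancel, leaving a continuant minus a positive multiple of a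
  shorter one.  The intermediate value theorem gives the root.\<close>

fun continuant :: "(nat \<Rightarrow> nat \<Rightarrow> 'a :: comm_ring_1) \<Rightarrow> nat \<Rightarrow> 'a" where
  "continuant F 0 = 1"
| "continuant F (Suc 0) = F 0 0"
| "continuant F (Suc (Suc k)) =
     F (Suc k) (Suc k) * continuant F (Suc k) - F (Suc k) k * F k (Suc k) * continuant F k"

lemma det_tridiagonal:
  fixes F :: "nat \<Rightarrow> nat \<Rightarrow> 'a :: comm_ring_1"
  assumes "\<And>i j. i < k \<Longrightarrow> j < k \<Longrightarrow> Suc i < j \<or> Suc j < i \<Longrightarrow> F i j = 0"
  shows "det (mat k k (\<lambda>(i, j). F i j)) = continuant F k"
  using assms
proof (induction F k rule: continuant.induct)
  case (1 F)
  then show ?case by simp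
next
  case (2 F)
  have "det (mat 1 1 (\<lambda>(i, j). F i j)) = (\<Sum>j<1. F 0 j * cofactor (mat 1 1 (\<lambda>(i, j). F i j)) 0 j)"
    by (subst laplace_expansion_row[of _ 1 0]) auto
  then show ?case by (simp add: cofactor_def mat_delete_def)
next
  case (3 F k)
  define A where "A = mat (Suc (Suc k)) (Suc (Suc k)) (\<lambda>(i, j). F i j)"
  have "det A = (\<Sum>j<Suc (Suc k). A $$ (Suc k, j) * cofactor A (Suc k) j)"
    by (rule laplace_expansion_row) (auto simp: A_def)
  also have "\<dots> = (\<Sum>j\<in>{k, Suc k}. A $$ (Suc k, j) * cofactor A (Suc k) j)"
    by (rule sum.mono_neutral_right) (auto simp: A_def "3.prems")
  finally have row: "det A = A $$ (Suc k, k) * cofactor A (Suc k) k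
      + A $$ (Suc k, Suc k) * cofactor A (Suc k) (Suc k)" by simp
  have minor_diag: "mat_delete A (Suc k) (Suc k) = mat (Suc k) (Suc k) (\<lambda>(i, j). F i j)"
    by (rule eq_matI) (auto simp: A_def mat_delete_def)
  have minor_sub: "det (mat_delete A (Suc k) k) = F k (Suc k) * continuant F k"
  proof -
    define C where "C = mat_delete A (Suc k) k"
    have "det C = (\<Sum>i<Suc k. C $$ (i, k) * cofactor C i k)"
      by (rule laplace_expansion_column) (auto simp: C_def A_def mat_delete_def)
    also have "\<dots> = (\<Sum>i\<in>{k}. C $$ (i, k) * cofactor C i k)"
      by (rule sum.mono_neutral_right) (auto simp: C_def A_def mat_delete_def "3.prems")
    finally have "det C = C $$ (k, k) * cofactor C k k" by simp
    moreover have "mat_delete C k k = mat k k (\<lambda>(i, j). F i j)"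
      by (rule eq_matI) (auto simp: C_def A_def mat_delete_def)
    ultimately show ?thesis
      by (simp add: cofactor_def "3.IH"(2) "3.prems" C_def A_def mat_delete_def)
  qed
  show ?case
    using row unfolding A_def[symmetric] cofactor_def minor_diag minor_sub
    by (simp add: "3.IH"(1) "3.prems" A_def algebra_simps)
qed

lemma det_upper_triangular_mat:
  fixes F :: "nat \<Rightarrow> nat \<Rightarrow> 'a :: comm_ring_1"
  assumes "\<And>i j. j < i \<Longrightarrow> i < k \<Longrightarrow> F i j = 0"
  shows "det (mat k k (\<lambda>(i, j). F i j)) = (\<Prod>i<k. F i i)"
proof -
  have "det (mat k k (\<lambda>(i, j). F i j)) = prod_list (diag_mat (mat k k (\<lambda>(i, j). F i j)))"
    by (rule det_upper_triangular) (auto simp: upper_triangular_def assms)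
  then show ?thesis
    by (simp add: diag_mat_def prod.distinct_set_conv_list[symmetric] atLeast0LessThan)
qed

lemma det_lower_triangular_mat:
  fixes F :: "nat \<Rightarrow> nat \<Rightarrow> 'a :: comm_ring_1"
  assumes "\<And>i j. i < j \<Longrightarrow> j < k \<Longrightarrow> F i j = 0"
  shows "det (mat k k (\<lambda>(i, j). F i j)) = (\<Prod>i<k. F i i)"
proof -
  have "det (mat k k (\<lambda>(i, j). F i j)) = prod_list (diag_mat (mat k k (\<lambda>(i, j). F i j)))"
    by (rule det_lower_triangular[of k]) (auto simp: assms)
  then show ?thesis
    by (simp add: diag_mat_def prod.distinct_set_conv_list[symmetric] atLeast0LessThan)
qed

lemma det_expand_last_column:
  fixes B :: "nat \<Rightarrow> nat \<Rightarrow> 'a :: comm_ring_1"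
  assumes "0 < k" and "\<And>i. 0 < i \<Longrightarrow> i < k \<Longrightarrow> B i k = 0"
  shows "det (mat (Suc k) (Suc k) (\<lambda>(i, j). B i j)) =
    B k k * det (mat k k (\<lambda>(i, j). B i j)) + (-1) ^ k * B 0 k * det (mat k k (\<lambda>(i, j). B (Suc i) j))"
proof -
  define C where "C = mat (Suc k) (Suc k) (\<lambda>(i, j). B i j)"
  have "det C = (\<Sum>i<Suc k. C $$ (i, k) * cofactor C i k)"
    by (rule laplace_expansion_column) (auto simp: C_def)
  also have "\<dots> = (\<Sum>i\<in>{0, k}. C $$ (i, k) * cofactor C i k)"
    by (rule sum.mono_neutral_right) (auto simp: C_def assms(2))
  finally have "det C = C $$ (0, k) * cofactor C 0 k + C $$ (k, k) * cofactor C k k"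
    using assms(1) by simp
  moreover have "mat_delete C k k = mat k k (\<lambda>(i, j). B i j)"
    by (rule eq_matI) (auto simp: C_def mat_delete_def)
  moreover have "mat_delete C 0 k = mat k k (\<lambda>(i, j). B (Suc i) j)"
    by (rule eq_matI) (auto simp: C_def mat_delete_def)
  ultimately show ?thesis
    by (simp add: C_def cofactor_def algebra_simps)
qed

lemma det_periodic_tridiagonal:
  fixes G :: "nat \<Rightarrow> nat \<Rightarrow> 'a :: comm_ring_1" and M :: nat
  defines "N \<equiv> Suc (Suc M)"
  assumes band: "\<And>i j. i \<le> N \<Longrightarrow> j \<le> N \<Longrightarrow> Suc i < j \<or> Suc j < i \<Longrightarrow>
    \<not> (i = 0 \<and> j = N) \<Longrightarrow> \<not> (i = N \<and> j = 0) \<Longrightarrow> G i j = 0"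
  shows "det (mat (Suc N) (Suc N) (\<lambda>(i, j). G i j)) =
     G N N * continuant G N
     - G N (Suc M) * (G (Suc M) N * continuant G (Suc M)
         + (-1) ^ Suc M * G 0 N * (\<Prod>i<Suc M. G (Suc i) i))
     + (-1) ^ N * G N 0 * (G (Suc M) N * (\<Prod>i<Suc M. G i (Suc i))
         + (-1) ^ Suc M * G 0 N * continuant (\<lambda>i j. G (Suc i) (Suc j)) (Suc M))"
proof -
  define A where "A = mat (Suc N) (Suc N) (\<lambda>(i, j). G i j)"
  have "det A = (\<Sum>j<Suc N. A $$ (N, j) * cofactor A N j)"
    by (rule laplace_expansion_row) (auto simp: A_def)
  also have "\<dots> = (\<Sum>j\<in>{0, Suc M, N}. A $$ (N, j) * cofactor A N j)"
    by (rule sum.mono_neutral_right) (auto simp: A_def N_def band)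
  finally have row: "det A = A $$ (N, 0) * cofactor A N 0
      + A $$ (N, Suc M) * cofactor A N (Suc M) + A $$ (N, N) * cofactor A N N"
    by (simp add: N_def)
  have minor_N: "det (mat_delete A N N) = continuant G N"
  proof -
    have "mat_delete A N N = mat N N (\<lambda>(i, j). G i j)"
      by (rule eq_matI) (auto simp: A_def mat_delete_def)
    then show ?thesis
      by (simp add: det_tridiagonal band)
  qed
  have minor_M: "det (mat_delete A N (Suc M)) = G (Suc M) N * continuant G (Suc M)
      + (-1) ^ Suc M * G 0 N * (\<Prod>i<Suc M. G (Suc i) i)"
  proof -
    define B where "B i j = G i (if j = Suc M then N else j)" for i j
    have "mat_delete A N (Suc M) = mat (Suc (Suc M)) (Suc (Suc M)) (\<lambda>(i, j). B i j)"
      by (rule eq_matI) (auto simp: A_def B_def N_def mat_delete_def)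
    moreover have "mat (Suc M) (Suc M) (\<lambda>(i, j). B i j) = mat (Suc M) (Suc M) (\<lambda>(i, j). G i j)"
      by (rule cong_mat) (auto simp: B_def)
    moreover have "mat (Suc M) (Suc M) (\<lambda>(i, j). B (Suc i) j) = mat (Suc M) (Suc M) (\<lambda>(i, j). G (Suc i) j)"
      by (rule cong_mat) (auto simp: B_def)
    moreover have "det (mat (Suc M) (Suc M) (\<lambda>(i, j). G i j)) = continuant G (Suc M)"
      by (rule det_tridiagonal) (auto simp: N_def band)
    moreover have "det (mat (Suc M) (Suc M) (\<lambda>(i, j). G (Suc i) j)) = (\<Prod>i<Suc M. G (Suc i) i)"
      by (rule det_upper_triangular_mat) (auto simp: N_def band)
    moreover have "det (mat (Suc (Suc M)) (Suc (Suc M)) (\<lambda>(i, j). B i j)) =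
        B (Suc M) (Suc M) * det (mat (Suc M) (Suc M) (\<lambda>(i, j). B i j))
        + (-1) ^ Suc M * B 0 (Suc M) * det (mat (Suc M) (Suc M) (\<lambda>(i, j). B (Suc i) j))"
      by (rule det_expand_last_column) (auto simp: B_def N_def band)
    ultimately show ?thesis by (simp add: B_def)
  qed
  have minor_0: "det (mat_delete A N 0) = G (Suc M) N * (\<Prod>i<Suc M. G i (Suc i))
      + (-1) ^ Suc M * G 0 N * continuant (\<lambda>i j. G (Suc i) (Suc j)) (Suc M)"
  proof -
    have "mat_delete A N 0 = mat (Suc (Suc M)) (Suc (Suc M)) (\<lambda>(i, j). G i (Suc j))"
      by (rule eq_matI) (auto simp: A_def N_def mat_delete_def)
    moreover have "det (mat (Suc M) (Suc M) (\<lambda>(i, j). G i (Suc j))) = (\<Prod>i<Suc M. G i (Suc i))"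
      by (rule det_lower_triangular_mat) (auto simp: N_def band)
    moreover have "det (mat (Suc M) (Suc M) (\<lambda>(i, j). G (Suc i) (Suc j))) =
        continuant (\<lambda>i j. G (Suc i) (Suc j)) (Suc M)"
      by (rule det_tridiagonal) (auto simp: N_def band)
    moreover have "det (mat (Suc (Suc M)) (Suc (Suc M)) (\<lambda>(i, j). G i (Suc j))) =
        G (Suc M) (Suc (Suc M)) * det (mat (Suc M) (Suc M) (\<lambda>(i, j). G i (Suc j)))
        + (-1) ^ Suc M * G 0 (Suc (Suc M)) * det (mat (Suc M) (Suc M) (\<lambda>(i, j). G (Suc i) (Suc j)))"
      by (rule det_expand_last_column[where B = "\<lambda>i j. G i (Suc j)"]) (auto simp: N_def band)
    ultimately show ?thesis by (simp add: N_def)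
  qed
  show ?thesis
    using row unfolding A_def[symmetric] cofactor_def minor_N minor_M minor_0
    by (simp add: A_def N_def algebra_simps)
qed

fun tridiag_poly :: "(nat \<Rightarrow> 'a :: comm_ring_1) \<Rightarrow> 'a \<Rightarrow> nat \<Rightarrow> nat \<Rightarrow> 'a" where
  "tridiag_poly q x i 0 = 1"
| "tridiag_poly q x i (Suc 0) = x"
| "tridiag_poly q x i (Suc (Suc k)) = x * tridiag_poly q x i (Suc k) - q (i + k) * tridiag_poly q x i k"

lemma continuant_eq_tridiag_poly:
  fixes F :: "nat \<Rightarrow> nat \<Rightarrow> 'a :: comm_ring_1"
  assumes "\<And>i. d \<le> i \<Longrightarrow> i < d + k \<Longrightarrow> F i i = x"
    and "\<And>i. d \<le> i \<Longrightarrow> Suc i < d + k \<Longrightarrow> F (Suc i) i * F i (Suc i) = q i"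
  shows "continuant (\<lambda>i j. F (d + i) (d + j)) k = tridiag_poly q x d k"
  using assms
proof (induction q x d k rule: tridiag_poly.induct)
  case (3 q x d k)
  have "F (d + Suc k) (d + Suc k) = x" and "F (d + Suc k) (d + k) * F (d + k) (d + Suc k) = q (d + k)"
    using "3.prems"[of "d + Suc k"] "3.prems"(2)[of "d + k"] by simp_all
  then show ?case
    using "3.IH" "3.prems" by (simp add: mult.assoc)
qed simp_all

lemma tridiag_poly_split:
  "tridiag_poly q x i (Suc J + Suc L) =
     tridiag_poly q x i (Suc J) * tridiag_poly q x (i + Suc J) (Suc L)
     - q (i + J) * tridiag_poly q x i J * tridiag_poly q x (i + J + 2) L"
proof (induction L rule: induct_nat_012)
  case (ge2 n)
  let ?P = "tridiag_poly q x i" and ?R = "tridiag_poly q x (i + Suc J)"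
    and ?S = "tridiag_poly q x (i + J + 2)" and ?c = "q (i + J + 2 + n)"
  have "?P (Suc J + Suc (Suc (Suc n))) = x * ?P (Suc J + Suc (Suc n)) - ?c * ?P (Suc J + Suc n)"
    by (simp add: ac_simps)
  also have "\<dots> = ?P (Suc J) * (x * ?R (Suc (Suc n)) - ?c * ?R (Suc n))
      - q (i + J) * ?P J * (x * ?S (Suc n) - ?c * ?S n)"
    unfolding ge2.IH by (simp add: algebra_simps del: tridiag_poly.simps)
  also have "x * ?R (Suc (Suc n)) - ?c * ?R (Suc n) = ?R (Suc (Suc (Suc n)))"
    by (simp add: ac_simps)
  also have "x * ?S (Suc n) - ?c * ?S n = ?S (Suc (Suc n))"
    by (simp add: ac_simps)
  finally show ?case .
qed (simp_all add: algebra_simps)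

lemma tridiag_poly_expand_first:
  "tridiag_poly q x i (Suc (Suc L)) = x * tridiag_poly q x (Suc i) (Suc L) - q i * tridiag_poly q x (i + 2) L"
  using tridiag_poly_split[of q x i 0 L] by simp

lemma tridiag_poly_pos_mono:
  fixes q :: "nat \<Rightarrow> real"
  assumes "x > 0" and "\<And>j. i \<le> j \<Longrightarrow> j < i + k \<Longrightarrow> q j \<le> 0"
  shows "0 < tridiag_poly q x i (Suc k) \<and> x * tridiag_poly q x i k \<le> tridiag_poly q x i (Suc k)"
proof -
  have "0 < tridiag_poly q x i k \<and> 0 < tridiag_poly q x i (Suc k)
      \<and> x * tridiag_poly q x i k \<le> tridiag_poly q x i (Suc k)"
    using assms(2)
  proof (induction k)
    case 0
    then show ?case using \<open>x > 0\<close> by simp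
  next
    case (Suc k)
    then have "0 < tridiag_poly q x i k" "0 < tridiag_poly q x i (Suc k)" "q (i + k) \<le> 0"
      by auto
    then have "x * tridiag_poly q x i (Suc k) \<le> tridiag_poly q x i (Suc (Suc k))"
      by (simp add: mult_nonpos_nonneg)
    moreover have "0 < x * tridiag_poly q x i (Suc k)"
      using \<open>x > 0\<close> \<open>0 < tridiag_poly q x i (Suc k)\<close> by simp
    ultimately show ?case
      using \<open>0 < tridiag_poly q x i (Suc k)\<close> by linarith
  qed
  then show ?thesis by blast
qed

lemma tridiag_poly_pos:
  fixes q :: "nat \<Rightarrow> real"
  assumes "x > 0" and "\<And>j. i \<le> j \<Longrightarrow> Suc j < i + k \<Longrightarrow> q j \<le> 0"
  shows "0 < tridiag_poly q x i k"
proof (cases k)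
  case (Suc k')
  then show ?thesis
    using tridiag_poly_pos_mono[of x i k' q] assms by auto
qed simp

lemma tridiag_poly_expand_first_ge:
  fixes q :: "nat \<Rightarrow> real"
  assumes "x > 0" and "\<And>j. i \<le> j \<Longrightarrow> j < i + k \<Longrightarrow> q j \<le> 0"
  shows "x * tridiag_poly q x (Suc i) k \<le> tridiag_poly q x i (Suc k)"
proof (cases k)
  case (Suc L)
  have "0 < tridiag_poly q x (i + 2) L"
    by (rule tridiag_poly_pos) (use assms Suc in auto)
  moreover have "q i \<le> 0" using assms(2) Suc by simp
  ultimately show ?thesis
    using tridiag_poly_expand_first[of q x i L] Suc by (simp add: mult_nonpos_nonneg)
qed simp

lemma tridiag_poly_nonpos:
  fixes q :: "nat \<Rightarrow> real"
  assumes "x > 0" "s \<ge> 0" "q i = x\<^sup>2 + s" "q (Suc i) = - s"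
    and "\<And>j. Suc (Suc i) \<le> j \<Longrightarrow> j < Suc i + k \<Longrightarrow> q j \<le> 0"
  shows "tridiag_poly q x i (Suc (Suc k)) \<le> 0"
proof (cases k)
  case 0
  then show ?thesis using assms by (simp add: power2_eq_square)
next
  case (Suc L)
  let ?C = "tridiag_poly q x (i + 2) (Suc L)" and ?D = "tridiag_poly q x (i + 3) L"
  have "x * ?D \<le> ?C"
    using tridiag_poly_expand_first_ge[of x "i + 2" L q] assms Suc by (simp add: numeral_3_eq_3)
  have "tridiag_poly q x (Suc i) (Suc (Suc L)) = x * ?C + s * ?D"
    using tridiag_poly_expand_first[of q x "Suc i" L] assms(4) by (simp add: numeral_3_eq_3)
  then have "tridiag_poly q x i (Suc (Suc k)) = s * (x * ?D - ?C)"
    using tridiag_poly_expand_first[of q x i "Suc L"] assms(3) Suc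
    by (simp add: algebra_simps power2_eq_square)
  also have "\<dots> \<le> 0"
    using \<open>x * ?D \<le> ?C\<close> assms(2) by (simp add: mult_nonneg_nonpos)
  finally show ?thesis .
qed

lemma continuous_on_tridiag_poly: "continuous_on S (\<lambda>x::real. tridiag_poly q x i k)"
  by (induction q _ i k rule: tridiag_poly.induct) (auto intro!: continuous_intros)

lemma charp_tri_mat:
  "charp (tri_mat \<alpha> \<beta> a) x =
     tridiag_poly (\<lambda>i. - a (\<alpha> + int i) * a (\<alpha> + int i + 1)) x 0 (nat (\<beta> - \<alpha> + 1))"
proof -
  define N where "N = nat (\<beta> - \<alpha> + 1)"
  define G where "G i j = (if i = j then x else 0) - (let r = \<alpha> + int i; c = \<alpha> + int j in
     if c = r + 1 then a c else if c = r - 1 then - a c else 0)" for i j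
  have "x \<cdot>\<^sub>m 1\<^sub>m (dim_row (tri_mat \<alpha> \<beta> a)) - tri_mat \<alpha> \<beta> a = mat N N (\<lambda>(i, j). G i j)"
    by (rule eq_matI) (auto simp: tri_mat_def N_def G_def Let_def)
  then have "charp (tri_mat \<alpha> \<beta> a) x = det (mat N N (\<lambda>(i, j). G i j))"
    by (simp add: charp_def)
  also have "\<dots> = continuant G N"
    by (rule det_tridiagonal) (auto simp: G_def Let_def)
  also have "\<dots> = continuant (\<lambda>i j. G (0 + i) (0 + j)) N"
    by simp
  also have "\<dots> = tridiag_poly (\<lambda>i. - a (\<alpha> + int i) * a (\<alpha> + int i + 1)) x 0 N"
    by (rule continuant_eq_tridiag_poly) (auto simp: G_def Let_def algebra_simps)
  finally show ?thesis by (simp add: N_def)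
qed

lemma charp_cyc_mat:
  assumes "odd n" and "n \<ge> 3"
  shows "charp (cyc_mat n a) x =
     tridiag_poly (\<lambda>i. - a i * a (Suc i)) x 0 n + a 0 * a (n - 1) * tridiag_poly (\<lambda>i. - a i * a (Suc i)) x 1 (n - 2)"
proof -
  define M where "M = n - 3"
  define N where "N = Suc (Suc M)"
  have n: "n = Suc (Suc (Suc M))" and nN: "n = Suc N"
    using \<open>n \<ge> 3\<close> by (simp_all add: M_def N_def)
  define q where "q = (\<lambda>i. - a i * a (Suc i))"
  define G where "G i j = (if i = j then x else 0)
    - (if j = (i + 1) mod n then a j else if (j + 1) mod n = i then - a j else 0)" for i j
  have wrap: "(i + 1) mod n = (if i = N then 0 else i + 1)" if "i \<le> N" for i
    using that by (auto simp: nN)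
  have diag: "G i i = x" if "i \<le> N" for i
    using that wrap[OF that] by (auto simp: G_def N_def)
  have sub: "G (Suc i) i = a i" and sup: "G i (Suc i) = - a (Suc i)" if "i < N" for i
    using that wrap[of i] wrap[of "Suc i"] by (simp_all add: G_def N_def)
  have corner: "G 0 N = a N" "G N 0 = - a 0"
    using wrap[of 0] wrap[of N] by (simp_all add: G_def N_def)
  have band: "G i j = 0" if "i \<le> N" "j \<le> N" "Suc i < j \<or> Suc j < i"
    "\<not> (i = 0 \<and> j = N)" "\<not> (i = N \<and> j = 0)" for i j
    using that wrap[of i] wrap[of j] by (auto simp: G_def)
  have signs: "(-1::real) ^ N = 1" "(-1::real) ^ Suc M = -1"
    using \<open>odd n\<close> by (simp_all add: n N_def)
  have K0: "continuant G N = tridiag_poly q x 0 N"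
    and K1: "continuant G (Suc M) = tridiag_poly q x 0 (Suc M)"
    and K2: "continuant (\<lambda>i j. G (Suc i) (Suc j)) (Suc M) = tridiag_poly q x 1 (Suc M)"
    using continuant_eq_tridiag_poly[of 0 N G x q] continuant_eq_tridiag_poly[of 0 "Suc M" G x q]
      continuant_eq_tridiag_poly[of 1 "Suc M" G x q]
    by (simp_all add: diag sub sup q_def N_def)
  have P1: "(\<Prod>i<Suc M. G (Suc i) i) = (\<Prod>i<Suc M. a i)"
    by (rule prod.cong) (auto simp: sub N_def)
  have P2: "(\<Prod>i<Suc M. G i (Suc i)) = - (\<Prod>i<Suc M. a (Suc i))"
  proof -
    have "(\<Prod>i<Suc M. G i (Suc i)) = (\<Prod>i<Suc M. - a (Suc i))"
      by (rule prod.cong) (auto simp: sup N_def)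
    then show ?thesis using signs by (simp add: prod_uminus)
  qed
  have cyclic: "a (Suc M) * (\<Prod>i<Suc M. a i) = a 0 * (\<Prod>i<Suc M. a (Suc i))"
    using prod.lessThan_Suc[of a "Suc M"] prod.lessThan_Suc_shift[of a "Suc M"] by (simp add: mult.commute)
  have "x \<cdot>\<^sub>m 1\<^sub>m (dim_row (cyc_mat n a)) - cyc_mat n a = mat (Suc N) (Suc N) (\<lambda>(i, j). G i j)"
    by (rule eq_matI) (auto simp: cyc_mat_def nN G_def)
  then have "charp (cyc_mat n a) x = det (mat (Suc N) (Suc N) (\<lambda>(i, j). G i j))"
    by (simp add: charp_def)
  also have "\<dots> = G N N * continuant G N
     - G N (Suc M) * (G (Suc M) N * continuant G (Suc M)
         + (-1) ^ Suc M * G 0 N * (\<Prod>i<Suc M. G (Suc i) i))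
     + (-1) ^ N * G N 0 * (G (Suc M) N * (\<Prod>i<Suc M. G i (Suc i))
         + (-1) ^ Suc M * G 0 N * continuant (\<lambda>i j. G (Suc i) (Suc j)) (Suc M))"
    unfolding N_def by (rule det_periodic_tridiagonal) (use band in \<open>auto simp: N_def\<close>)
  also have "\<dots> = x * tridiag_poly q x 0 N + a (Suc M) * a N * tridiag_poly q x 0 (Suc M)
      + a 0 * a N * tridiag_poly q x 1 (Suc M)
      + a N * (a (Suc M) * (\<Prod>i<Suc M. a i) - a 0 * (\<Prod>i<Suc M. a (Suc i)))"
  proof -
    have "G N N = x" "G N (Suc M) = a (Suc M)" "G (Suc M) N = - a N"
      using diag[of N] sub[of "Suc M"] sup[of "Suc M"] by (simp_all add: N_def)
    then show ?thesis
      unfolding corner signs K0 K1 K2 P1 P2 by (simp add: algebra_simps del: prod.lessThan_Suc)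
  qed
  also have "\<dots> = tridiag_poly q x 0 n + a 0 * a (n - 1) * tridiag_poly q x 1 (n - 2)"
    using tridiag_poly.simps(3)[of q x 0 "Suc M"]
    by (simp add: cyclic n N_def q_def algebra_simps del: tridiag_poly.simps prod.lessThan_Suc)
  finally show ?thesis by (simp add: q_def)
qed

lemma root_above_of_sign_change:
  fixes f :: "real \<Rightarrow> real"
  assumes "continuous_on UNIV f" "f x0 < 0" "0 < f X" "x0 < X"
  shows "\<exists>x>x0. f x = 0"
proof -
  obtain x where "x0 \<le> x" "x \<le> X" "f x = 0"
    using IVT'[of f x0 0 X] assms continuous_on_subset by fastforce
  moreover have "x \<noteq> x0" using \<open>f x = 0\<close> assms(2) by auto
  ultimately show ?thesis by force
qed

lemma exists_large_square: "\<exists>X::real. x0 < X \<and> 0 < X \<and> Q < X\<^sup>2"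
proof (intro exI conjI)
  define X where "X = \<bar>x0\<bar> + \<bar>Q\<bar> + 1"
  have "X \<le> X\<^sup>2"
    using mult_right_mono[of 1 X X] by (simp add: X_def power2_eq_square)
  then show "x0 < X" "0 < X" "Q < X\<^sup>2"
    by (auto simp: X_def)
qed

lemma tridiag_poly_root_above:
  fixes q :: "nat \<Rightarrow> real" and p r :: nat
  defines "N \<equiv> Suc p + Suc (Suc r)"
  assumes "0 < x0" "0 \<le> s" "0 < q p" and qSp: "q (Suc p) = x0\<^sup>2 + s"
    and "q (Suc (Suc p)) = - s"
    and nonpos: "\<And>j. j \<noteq> p \<Longrightarrow> j \<noteq> Suc p \<Longrightarrow> Suc j < N \<Longrightarrow> q j \<le> 0"
  shows "\<exists>x>x0. tridiag_poly q x 0 N = 0"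
proof -
  let ?L = "\<lambda>x. tridiag_poly q x 0 (Suc p)" and ?L' = "\<lambda>x. tridiag_poly q x 0 p"
    and ?R = "\<lambda>x. tridiag_poly q x (Suc (Suc p)) (Suc r)" and ?R' = "\<lambda>x. tridiag_poly q x (p + 3) r"
  have split: "tridiag_poly q x 0 N = ?L x * tridiag_poly q x (Suc p) (Suc (Suc r)) - q p * ?L' x * ?R x" for x
    using tridiag_poly_split[of q x 0 p "Suc r"] by (simp add: N_def numeral_2_eq_2)
  have L: "0 < ?L x \<and> x * ?L' x \<le> ?L x" and L': "0 < ?L' x" and R: "0 < ?R x" if "0 < x" for x
    using tridiag_poly_pos_mono[of x 0 p q] tridiag_poly_pos[of x 0 p q]
      tridiag_poly_pos_mono[of x "Suc (Suc p)" r q] that nonpos by (auto simp: N_def)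
  have "tridiag_poly q x0 (Suc p) (Suc (Suc r)) \<le> 0"
    by (rule tridiag_poly_nonpos) (use assms in \<open>auto simp: N_def\<close>)
  then have neg: "tridiag_poly q x0 0 N < 0"
    using split[of x0] L[OF \<open>0 < x0\<close>] R[OF \<open>0 < x0\<close>] L'[OF \<open>0 < x0\<close>] \<open>0 < q p\<close>
    by (smt (verit) mult_nonneg_nonpos mult_pos_pos)
  obtain X where X: "x0 < X" "0 < X" "q p + q (Suc p) < X\<^sup>2"
    using exists_large_square by blast
  have pos: "0 < tridiag_poly q X 0 N"
  proof -
    have "X * ?R' X \<le> ?R X"
      using tridiag_poly_expand_first_ge[of X "Suc (Suc p)" r q] X nonpos
      by (auto simp: N_def numeral_3_eq_3)
    have expand: "tridiag_poly q X 0 N = X * ?L X * ?R X - q p * ?L' X * ?R X - q (Suc p) * ?L X * ?R' X"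
      using split[of X] tridiag_poly_expand_first[of q X "Suc p" r]
      by (simp add: algebra_simps numeral_3_eq_3 del: tridiag_poly.simps)
    have "X * tridiag_poly q X 0 N = X\<^sup>2 * ?L X * ?R X - q p * (X * ?L' X) * ?R X
        - q (Suc p) * ?L X * (X * ?R' X)"
      unfolding expand by (simp add: algebra_simps power2_eq_square del: tridiag_poly.simps)
    also have "\<dots> \<ge> (X\<^sup>2 - q p - q (Suc p)) * (?L X * ?R X)"
    proof -
      have "q p * (X * ?L' X) * ?R X \<le> q p * ?L X * ?R X"
        using L[OF \<open>0 < X\<close>] R[OF \<open>0 < X\<close>] \<open>0 < q p\<close> by (simp add: mult_right_mono)
      moreover have "q (Suc p) * ?L X * (X * ?R' X) \<le> q (Suc p) * ?L X * ?R X"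
        using \<open>X * ?R' X \<le> ?R X\<close> L[OF \<open>0 < X\<close>] qSp \<open>0 \<le> s\<close>
        by (intro mult_left_mono) auto
      ultimately show ?thesis by (simp add: algebra_simps)
    qed
    finally have "0 < X * tridiag_poly q X 0 N"
      using X(3) L[OF \<open>0 < X\<close>] R[OF \<open>0 < X\<close>] by (smt (verit) mult_pos_pos)
    then show ?thesis
      using \<open>0 < X\<close> by (simp add: zero_less_mult_iff)
  qed
  show ?thesis
    by (rule root_above_of_sign_change[OF continuous_on_tridiag_poly neg pos X(1)])
qed

lemma tridiag_poly_periodic_root_above:
  fixes q :: "nat \<Rightarrow> real"
  assumes "3 \<le> n" "0 < x0" "0 \<le> s" "0 < c" and q0: "q 0 = x0\<^sup>2 + s" and "q 1 = - s"
    and nonpos: "\<And>j. 0 < j \<Longrightarrow> Suc j < n \<Longrightarrow> q j \<le> 0"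
  shows "\<exists>x>x0. tridiag_poly q x 0 n - c * tridiag_poly q x 1 (n - 2) = 0"
proof -
  define M where "M = n - 3"
  have n: "n = Suc (Suc (Suc M))" and n2: "n - 2 = Suc M"
    using \<open>3 \<le> n\<close> by (simp_all add: M_def)
  let ?K = "\<lambda>x. tridiag_poly q x 1 (Suc (Suc M))" and ?K1 = "\<lambda>x. tridiag_poly q x 2 (Suc M)"
    and ?K2 = "\<lambda>x. tridiag_poly q x 1 (Suc M)"
  have K: "0 < ?K x \<and> x * ?K2 x \<le> ?K x" and K1: "x * ?K1 x \<le> ?K x" if "0 < x" for x
    using tridiag_poly_pos_mono[of x 1 "Suc M" q] tridiag_poly_expand_first_ge[of x 1 "Suc M" q]
      that nonpos by (auto simp: n numeral_2_eq_2)
  have "tridiag_poly q x0 0 n \<le> 0"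
    unfolding n by (rule tridiag_poly_nonpos) (use assms in \<open>auto simp: n\<close>)
  moreover have "0 < c * ?K2 x0"
    using tridiag_poly_pos[of x0 1 "Suc M" q] assms by (auto simp: n)
  ultimately have neg: "tridiag_poly q x0 0 n - c * tridiag_poly q x0 1 (n - 2) < 0"
    by (simp add: n2)
  obtain X where X: "x0 < X" "0 < X" "q 0 + c < X\<^sup>2"
    using exists_large_square by blast
  have pos: "0 < tridiag_poly q X 0 n - c * tridiag_poly q X 1 (n - 2)"
  proof -
    have expand: "tridiag_poly q X 0 n = X * ?K X - q 0 * ?K1 X"
      using tridiag_poly_expand_first[of q X 0 "Suc M"] by (simp add: n numeral_2_eq_2 del: tridiag_poly.simps)
    have "X * (tridiag_poly q X 0 n - c * tridiag_poly q X 1 (n - 2))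
        = X\<^sup>2 * ?K X - q 0 * (X * ?K1 X) - c * (X * ?K2 X)"
      unfolding expand n2 by (simp add: algebra_simps power2_eq_square del: tridiag_poly.simps)
    also have "\<dots> \<ge> (X\<^sup>2 - q 0 - c) * ?K X"
    proof -
      have "q 0 * (X * ?K1 X) \<le> q 0 * ?K X"
        using K[OF \<open>0 < X\<close>] K1[OF \<open>0 < X\<close>] q0 \<open>0 \<le> s\<close>
        by (intro mult_left_mono) (auto simp del: tridiag_poly.simps)
      moreover have "c * (X * ?K2 X) \<le> c * ?K X"
        using K[OF \<open>0 < X\<close>] \<open>0 < c\<close> by (intro mult_left_mono) (auto simp del: tridiag_poly.simps)
      ultimately show ?thesis by (simp add: algebra_simps)
    qed
    finally have "0 < X * (tridiag_poly q X 0 n - c * tridiag_poly q X 1 (n - 2))"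
      using X(3) K[OF \<open>0 < X\<close>] by (smt (verit) mult_pos_pos)
    then show ?thesis
      using \<open>0 < X\<close> by (simp add: zero_less_mult_iff)
  qed
  show ?thesis
    by (rule root_above_of_sign_change[OF _ neg pos X(1)]) (intro continuous_intros continuous_on_tridiag_poly)
qed

lemma cyc_mat_charp_root:
  fixes a :: "nat \<Rightarrow> real"
  assumes "n \<ge> 3" "odd n" "a 0 < 0" "\<forall>k\<in>{1..<n}. a k > 0" "a 0 + a 2 < 0"
  shows "\<exists>x>sqrt (- a 1 * (a 0 + a 2)). charp (cyc_mat n a) x = 0"
proof -
  define x0 where "x0 = sqrt (- a 1 * (a 0 + a 2))"
  have "0 < a 1" "0 < a 2" "0 < a (n - 1)"
    using assms(1,4) by auto
  then have "0 < - a 1 * (a 0 + a 2)"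
    using assms(5) by (simp add: mult_pos_neg)
  then have "0 < x0" "x0\<^sup>2 = - a 1 * (a 0 + a 2)"
    by (simp_all add: x0_def)
  have "\<exists>x>x0. tridiag_poly (\<lambda>i. - a i * a (Suc i)) x 0 n
      - (- a 0 * a (n - 1)) * tridiag_poly (\<lambda>i. - a i * a (Suc i)) x 1 (n - 2) = 0"
  proof (rule tridiag_poly_periodic_root_above[where s = "a 1 * a 2"])
    show "0 < - a 0 * a (n - 1)"
      using \<open>a 0 < 0\<close> \<open>0 < a (n - 1)\<close> by (simp add: mult_neg_pos)
    show "- a 0 * a (Suc 0) = x0\<^sup>2 + a 1 * a 2"
      using \<open>x0\<^sup>2 = - a 1 * (a 0 + a 2)\<close> by (simp add: algebra_simps)
    show "- a j * a (Suc j) \<le> 0" if "0 < j" "Suc j < n" for j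
    proof -
      have "0 < a j" "0 < a (Suc j)"
        using assms(4) that by auto
      then show ?thesis by simp
    qed
    show "0 \<le> a 1 * a 2"
      using \<open>0 < a 1\<close> \<open>0 < a 2\<close> by simp
  qed (use assms \<open>0 < x0\<close> in \<open>auto simp: numeral_2_eq_2\<close>)
  then show ?thesis
    using charp_cyc_mat[OF assms(2,1)] by (simp add: x0_def)
qed

lemma tri_mat_charp_root:
  fixes \<alpha> \<beta> :: int and a :: "int \<Rightarrow> real"
  assumes "\<alpha> \<le> -1" "\<beta> \<ge> 1" "a 0 < 0"
    and pos: "\<And>k. \<alpha> \<le> k \<Longrightarrow> k \<le> max \<beta> 2 \<Longrightarrow> k \<noteq> 0 \<Longrightarrow> a k > 0" and "a 0 + a 2 < 0"
  shows "\<exists>x>sqrt (- a 1 * (a 0 + a 2)). charp (tri_mat \<alpha> \<beta> a) x = 0"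
proof -
  define p where "p = nat (- \<alpha> - 1)"
  define r where "r = nat (\<beta> - 1)"
  define x0 where "x0 = sqrt (- a 1 * (a 0 + a 2))"
  have \<alpha>: "\<alpha> = - int p - 1" and N: "nat (\<beta> - \<alpha> + 1) = Suc p + Suc (Suc r)"
    using assms(1,2) by (simp_all add: p_def r_def)
  have "0 < a (-1)" "0 < a 1" "0 < a 2"
    using pos assms(1,2) by auto
  then have "0 < - a 1 * (a 0 + a 2)"
    using assms(5) by (simp add: mult_pos_neg)
  then have "0 < x0" "x0\<^sup>2 = - a 1 * (a 0 + a 2)"
    by (simp_all add: x0_def)
  have "\<exists>x>x0. tridiag_poly (\<lambda>i. - a (\<alpha> + int i) * a (\<alpha> + int i + 1)) x 0 (Suc p + Suc (Suc r)) = 0"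
  proof (rule tridiag_poly_root_above[where s = "a 1 * a 2"])
    show "0 < - a (\<alpha> + int p) * a (\<alpha> + int p + 1)"
      using \<open>0 < a (-1)\<close> \<open>a 0 < 0\<close> by (simp add: \<alpha> mult_pos_neg)
    show "- a (\<alpha> + int (Suc p)) * a (\<alpha> + int (Suc p) + 1) = x0\<^sup>2 + a 1 * a 2"
      using \<open>x0\<^sup>2 = - a 1 * (a 0 + a 2)\<close> by (simp add: \<alpha> algebra_simps)
    show "- a (\<alpha> + int (Suc (Suc p))) * a (\<alpha> + int (Suc (Suc p)) + 1) = - (a 1 * a 2)"
      by (simp add: \<alpha> algebra_simps)
    show "- a (\<alpha> + int j) * a (\<alpha> + int j + 1) \<le> 0"
      if "j \<noteq> p" "j \<noteq> Suc p" "Suc j < Suc p + Suc (Suc r)" for j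
    proof -
      have "0 < a (\<alpha> + int j)" "0 < a (\<alpha> + int j + 1)"
        using that assms(2) by (auto intro!: pos simp: \<alpha> r_def)
      then show ?thesis by (simp add: mult_pos_pos)
    qed
    show "0 \<le> a 1 * a 2"
      using \<open>0 < a 1\<close> \<open>0 < a 2\<close> by simp
  qed (rule \<open>0 < x0\<close>)
  then show ?thesis
    using charp_tri_mat[of \<alpha> \<beta> a] by (simp add: N x0_def)
qed

theorem lemma4:
  shows "(\<forall>(n::nat) (a::nat \<Rightarrow> real).
            n \<ge> 3 \<and> odd n \<and> a 0 < 0 \<and> (\<forall>k\<in>{1..<n}. a k > 0) \<and> a 0 + a 2 < 0
            \<longrightarrow> (\<exists>x. x > sqrt (- a 1 * (a 0 + a 2)) \<and> charp (cyc_mat n a) x = 0))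
       \<and> (\<forall>(\<alpha>::int) (\<beta>::int) (a::int \<Rightarrow> real).
            \<alpha> \<le> -1 \<and> \<beta> \<ge> 1 \<and> a 0 < 0
            \<and> (\<forall>k. \<alpha> \<le> k \<and> k \<le> max \<beta> 2 \<and> k \<noteq> 0 \<longrightarrow> a k > 0) \<and> a 0 + a 2 < 0
            \<longrightarrow> (\<exists>x. x > sqrt (- a 1 * (a 0 + a 2)) \<and> charp (tri_mat \<alpha> \<beta> a) x = 0))"
  using cyc_mat_charp_root tri_mat_charp_root by blast

end
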